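(* Suppose the LP decoder, on received word $y\in\Sigma^n$, outputs a codeword $c\in\mathcal C$ (i.e. the minimizer $(f,w)$ it computes has $f=\Xi(c)\in\{0,1\}^{(q-1)n}$). Then $c$ is a maximum-likelihood codeword: $p(y\mid c)\ge p(y\mid c')$ for all $c'\in\mathcal C$, where $p(y\mid c)=\prod_{i=1}^n p(y_i\mid c_i)$.
   Context: Let $R$ be a finite ring with $q$ elements and additive identity $0$; $R^-=R\setminus\{0\}$. Let $\mathcal H$ be an $m\times n$ matrix over $R$, $\mathcal C=\{c\in R^n:c\mathcal H^T=0\}$, $\mathcal I=\{1,\dots,n\}$, $\mathcal J=\{1,\dots,m\}$, $\mathcal I_j=\{i:\mathcal H_{j,i}\ne0\}$, $\mathcal C_j=\{b\in R^{\mathcal I_j}:\sum_{i\in\mathcal I_j}b_i\mathcal H_{j,i}=0\}$. Let $\xi:R\to\{0,1\}^{q-1}$ (coordinates indexed by $R^-$), $\xi(a)^{(\gamma)}=1$ iff $\gamma=a$; $\Xi(c)=(\xi(c_1)\mid\cdots\mid\xi(c_n))$, with coordinates $f_i^{(\alpha)}$ for $f\in\mathbb R^{(q-1)n}$. The polytope $\mathcal Q$ is the set of $(f,w)$, $w=(w_{j,b})_{j\in\mathcal J,b\in\mathcal C_j}$, with $w_{j,b}\ge0$, $\sum_{b\in\mathcal C_j}w_{j,b}=1$ for each $j$, and $f_i^{(\alpha)}=\sum_{b\in\mathcal C_j,b_i=\alpha}w_{j,b}$ for all $j$, $i\in\mathcal I_j$, $\alpha\in R^-$. Channel: memoryless with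 input alphabet $R$, output alphabet $\Sigma$ (finite, or $\mathbb R^l$ or $\mathbb C^l$), transition probability (density) $p(y\mid a)$. For $y\in\Sigma$ and $\alpha\in R^-$, $\lambda^{(\alpha)}(y)=\log\big(p(y\mid0)/p(y\mid\alpha)\big)$, and for $y\in\Sigma^n$, $\Lambda(y)$ is the vector with coordinates $\lambda^{(\alpha)}(y_i)$. The LP decoder computes a minimizer $(f,w)$ of $\Lambda(y)f^T=\sum_{i,\alpha}\lambda^{(\alpha)}(y_i)f_i^{(\alpha)}$ over $\mathcal Q$; if $f\in\{0,1\}^{(q-1)n}$ it outputs $\Xi^{-1}(f)$, otherwise it declares a decoding failure. *)

theory Defs
  imports Main "HOL.Transcendental"
begin

text \<open>Coordinates i are indexed by {..<n} (0-based), checks j by {..<m}.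
  The parity-check matrix is H :: nat => nat => 'r, entry (j,i) = H j i.
  Vectors over R of length n are functions nat => 'r that vanish outside {..<n}.\<close>

definition code :: "nat \<Rightarrow> nat \<Rightarrow> (nat \<Rightarrow> nat \<Rightarrow> 'r::{ring,finite}) \<Rightarrow> (nat \<Rightarrow> 'r) set" where
  "code m n H = {c. (\<forall>i. n \<le> i \<longrightarrow> c i = 0) \<and> (\<forall>j<m. (\<Sum>i<n. c i * H j i) = 0)}"

definition supp_row :: "nat \<Rightarrow> (nat \<Rightarrow> nat \<Rightarrow> 'r::{ring,finite}) \<Rightarrow> nat \<Rightarrow> nat set" where
  "supp_row n H j = {i. i < n \<and> H j i \<noteq> 0}"

definition local_code :: "nat \<Rightarrow> (nat \<Rightarrow> nat \<Rightarrow> 'r::{ring,finite}) \<Rightarrow> nat \<Rightarrow> (nat \<Rightarrow> 'r) set" where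
  "local_code n H j = {b. (\<forall>i. i \<notin> supp_row n H j \<longrightarrow> b i = 0) \<and>
                          (\<Sum>i\<in>supp_row n H j. b i * H j i) = 0}"

definition Xi :: "(nat \<Rightarrow> 'r::{ring,finite}) \<Rightarrow> nat \<Rightarrow> 'r \<Rightarrow> real" where
  "Xi c i \<alpha> = (if c i = \<alpha> then 1 else 0)"

text \<open>The polytope Q; f i alpha matters for i < n, alpha nonzero; w j b for j < m, b in C_j.\<close>
definition polytope_Q :: "nat \<Rightarrow> nat \<Rightarrow> (nat \<Rightarrow> nat \<Rightarrow> 'r::{ring,finite})
    \<Rightarrow> ((nat \<Rightarrow> 'r \<Rightarrow> real) \<times> (nat \<Rightarrow> (nat \<Rightarrow> 'r) \<Rightarrow> real)) set" where
  "polytope_Q m n H = {(f, w).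
      (\<forall>j<m. \<forall>b\<in>local_code n H j. w j b \<ge> 0) \<and>
      (\<forall>j<m. (\<Sum>b\<in>local_code n H j. w j b) = 1) \<and>
      (\<forall>j<m. \<forall>i\<in>supp_row n H j. \<forall>\<alpha>. \<alpha> \<noteq> 0 \<longrightarrow>
          f i \<alpha> = (\<Sum>b\<in>{b\<in>local_code n H j. b i = \<alpha>}. w j b))}"

text \<open>Log-likelihood ratio lambda^(alpha)(y) = log(p(y|0)/p(y|alpha)); p a = p(. | a).\<close>
definition llr :: "('r::{ring,finite} \<Rightarrow> 'y \<Rightarrow> real) \<Rightarrow> 'r \<Rightarrow> 'y \<Rightarrow> real" where
  "llr p \<alpha> y = ln (p 0 y / p \<alpha> y)"

definition lp_cost :: "nat \<Rightarrow> ('r::{ring,finite} \<Rightarrow> 'y \<Rightarrow> real) \<Rightarrow> (nat \<Rightarrow> 'y)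
    \<Rightarrow> (nat \<Rightarrow> 'r \<Rightarrow> real) \<Rightarrow> real" where
  "lp_cost n p y f = (\<Sum>i<n. \<Sum>\<alpha>\<in>UNIV - {0}. llr p \<alpha> (y i) * f i \<alpha>)"

definition lp_minimizer :: "nat \<Rightarrow> nat \<Rightarrow> (nat \<Rightarrow> nat \<Rightarrow> 'r::{ring,finite})
    \<Rightarrow> ('r \<Rightarrow> 'y \<Rightarrow> real) \<Rightarrow> (nat \<Rightarrow> 'y)
    \<Rightarrow> (nat \<Rightarrow> 'r \<Rightarrow> real) \<Rightarrow> (nat \<Rightarrow> (nat \<Rightarrow> 'r) \<Rightarrow> real) \<Rightarrow> bool" where
  "lp_minimizer m n H p y f w \<longleftrightarrow> (f, w) \<in> polytope_Q m n H \<and>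
     (\<forall>(f', w')\<in>polytope_Q m n H. lp_cost n p y f \<le> lp_cost n p y f')"

definition word_prob :: "nat \<Rightarrow> ('r::{ring,finite} \<Rightarrow> 'y \<Rightarrow> real) \<Rightarrow> (nat \<Rightarrow> 'y) \<Rightarrow> (nat \<Rightarrow> 'r) \<Rightarrow> real" where
  "word_prob n p y c = (\<Prod>i<n. p (c i) (y i))"

end

theory Submission
  imports Defs
begin

text \<open>Every codeword c' gives a point of the polytope: Xi c' together with the point masses on
  the restrictions of c' to the supports of the checks. At such points the LP cost equals the
  negative log-likelihood of the codeword up to an additive constant, so an LP minimizer of the
  form Xi c has the largest likelihood among all codewords.\<close>

lemma finite_local_code: "finite (local_code n H j)"
proof (rule finite_subset)
  show "local_code n H j \<subseteq>
      {b. \<forall>i. (i \<in> supp_row n H j \<longrightarrow> b i \<in> UNIV) \<and> (i \<notin> supp_row n H j \<longrightarrow> b i = 0)}"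
    unfolding local_code_def by auto
  show "finite \<dots>"
    by (rule finite_set_of_finite_funs) (simp_all add: supp_row_def)
qed

lemma restrict_codeword_in_local_code:
  assumes "c \<in> code m n H" and "j < m"
  shows "(\<lambda>i. if i \<in> supp_row n H j then c i else 0) \<in> local_code n H j"
proof -
  have "(\<Sum>i\<in>supp_row n H j. c i * H j i) = (\<Sum>i<n. c i * H j i)"
    by (rule sum.mono_neutral_left) (auto simp: supp_row_def)
  also have "\<dots> = 0"
    using assms unfolding code_def by auto
  finally show ?thesis
    unfolding local_code_def by auto
qed

lemma Xi_codeword_in_polytope_Q:
  assumes c: "c \<in> code m n H"
  shows "\<exists>w. (Xi c, w) \<in> polytope_Q m n H"
proof -
  define r where "r j = (\<lambda>i. if i \<in> supp_row n H j then c i else 0)" for j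
  define w where "w j b = (if b = r j then 1 else (0::real))" for j b
  have r: "r j \<in> local_code n H j" if "j < m" for j
    unfolding r_def using restrict_codeword_in_local_code[OF c that] .
  have "Xi c i \<alpha> = (\<Sum>b\<in>{b \<in> local_code n H j. b i = \<alpha>}. w j b)"
    if "j < m" and "i \<in> supp_row n H j" for j i \<alpha>
    using r[OF \<open>j < m\<close>] that finite_local_code[of n H j]
    by (simp add: w_def sum.delta' Xi_def r_def)
  moreover have "(\<Sum>b\<in>local_code n H j. w j b) = 1" if "j < m" for j
    using r[OF that] finite_local_code[of n H j] by (simp add: w_def sum.delta')
  moreover have "w j b \<ge> 0" for j b
    by (simp add: w_def)
  ultimately have "(Xi c, w) \<in> polytope_Q m n H"
    unfolding polytope_Q_def by blast
  then show ?thesis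
    by blast
qed

lemma lp_cost_Xi:
  assumes "\<And>i \<alpha>. i < n \<Longrightarrow> \<alpha> \<noteq> 0 \<Longrightarrow> f i \<alpha> = Xi c i \<alpha>"
  shows "lp_cost n p y f = (\<Sum>i<n. llr p (c i) (y i))"
  unfolding lp_cost_def
proof (rule sum.cong[OF refl])
  fix i assume "i \<in> {..<n}"
  then have "(\<Sum>\<alpha>\<in>UNIV - {0}. llr p \<alpha> (y i) * f i \<alpha>)
      = (\<Sum>\<alpha>\<in>UNIV - {0}. if \<alpha> = c i then llr p \<alpha> (y i) else 0)"
    using assms by (intro sum.cong) (auto simp: Xi_def)
  also have "\<dots> = llr p (c i) (y i)"
    \<comment> \<open>for c i = 0 the coordinate is absent, but then the log-likelihood ratio is ln 1 = 0\<close>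
    by (cases "c i = 0") (auto simp: sum.delta' llr_def)
  finally show "(\<Sum>\<alpha>\<in>UNIV - {0}. llr p \<alpha> (y i) * f i \<alpha>) = llr p (c i) (y i)" .
qed

lemma ln_word_prob:
  assumes "\<And>i a. i < n \<Longrightarrow> p a (y i) > 0"
  shows "ln (word_prob n p y c) = (\<Sum>i<n. ln (p (c i) (y i)))"
  unfolding word_prob_def by (intro ln_prod) (simp, metis assms lessThan_iff less_irrefl)

lemma word_prob_pos:
  assumes "\<And>i a. i < n \<Longrightarrow> p a (y i) > 0"
  shows "word_prob n p y c > 0"
  unfolding word_prob_def using assms by (intro prod_pos) auto

lemma lp_cost_Xi_eq_neg_ln_word_prob:
  assumes "\<And>i a. i < n \<Longrightarrow> p a (y i) > 0"
  shows "lp_cost n p y (Xi c) = (\<Sum>i<n. ln (p 0 (y i))) - ln (word_prob n p y c)"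
proof -
  have "llr p (c i) (y i) = ln (p 0 (y i)) - ln (p (c i) (y i))" if "i < n" for i
    using assms[OF that, of 0] assms[OF that, of "c i"] unfolding llr_def by (simp add: ln_div)
  then show ?thesis
    by (simp add: lp_cost_Xi ln_word_prob[of n p y, OF assms] sum_subtractf)
qed

theorem proposition2:
  fixes H :: "nat \<Rightarrow> nat \<Rightarrow> 'r::{ring,finite}"
    and p :: "'r \<Rightarrow> 'y \<Rightarrow> real"
    and y :: "nat \<Rightarrow> 'y"
    and f :: "nat \<Rightarrow> 'r \<Rightarrow> real"
    and w :: "nat \<Rightarrow> (nat \<Rightarrow> 'r) \<Rightarrow> real"
    and c :: "nat \<Rightarrow> 'r"
    and m n :: nat
  assumes pos: "\<And>i a. i < n \<Longrightarrow> p a (y i) > 0"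
    and minim: "lp_minimizer m n H p y f w"
    and c_code: "c \<in> code m n H"
    and f_eq: "\<And>i \<alpha>. i < n \<Longrightarrow> \<alpha> \<noteq> 0 \<Longrightarrow> f i \<alpha> = Xi c i \<alpha>"
  shows "\<forall>c'\<in>code m n H. word_prob n p y c \<ge> word_prob n p y c'"
proof
  fix c' assume "c' \<in> code m n H"
  then obtain w' where "(Xi c', w') \<in> polytope_Q m n H"
    using Xi_codeword_in_polytope_Q by blast
  then have "lp_cost n p y f \<le> lp_cost n p y (Xi c')"
    using minim unfolding lp_minimizer_def by auto
  moreover have "lp_cost n p y f = lp_cost n p y (Xi c)"
    using f_eq by (simp add: lp_cost_Xi)
  ultimately have "ln (word_prob n p y c') \<le> ln (word_prob n p y c)"
    by (simp add: lp_cost_Xi_eq_neg_ln_word_prob[of n p y, OF pos])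
  then show "word_prob n p y c' \<le> word_prob n p y c"
    using word_prob_pos[of n p y, OF pos] by simp
qed

end
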